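(* Let $G$ be a finite group with $|G| = mp$, where $p$ is a prime and $m$ is a natural number such that $m/q < p < m$, where $q$ is the smallest prime divisor of $m$. Suppose that a Sylow $p$-subgroup of $G$ is not normal in $G$. Then $G$ possesses a characteristic abelian $p$-complement (a characteristic abelian subgroup of order $m$). *)

theory Defs
  imports "HOL-Algebra.Algebra" "HOL-Computational_Algebra.Primes"
begin

definition characteristic_subgroup :: "'a set \<Rightarrow> ('a, 'b) monoid_scheme \<Rightarrow> bool" where
  "characteristic_subgroup H G \<longleftrightarrow>
     subgroup H G \<and> (\<forall>\<phi> \<in> iso G G. \<phi> ` H = H)"

definition sylow_subgroup :: "nat \<Rightarrow> 'a set \<Rightarrow> ('a, 'b) monoid_scheme \<Rightarrow> bool" where
  "sylow_subgroup p P G \<longleftrightarrow>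
     subgroup P G \<and> card P = p ^ multiplicity p (order G)"

end

theory Submission
  imports Defs
begin

text \<open>
  Since \<open>m < p q\<close> and \<open>p < m\<close>, the prime \<open>p\<close> does not divide \<open>m\<close>, so a Sylow
  \<open>p\<close>-subgroup \<open>P\<close> has order \<open>p\<close>. Every divisor of \<open>m\<close> greater than 1 is at least \<open>q\<close>,
  so in any factorisation \<open>m = c d\<close> with \<open>c, d \<ge> 2\<close> both factors are below \<open>p\<close>. Applied to
  the index \<open>c\<close> of the normaliser \<open>N\<close> of \<open>P\<close> and to \<open>|N| = p d\<close>, this shows \<open>N = P\<close>:
  otherwise, for \<open>g \<notin> N\<close>, the \<open>p\<close> cosets \<open>N g h\<close> (\<open>h \<in> P\<close>) cannot be distinct, which puts
  a nontrivial element of \<open>g P g\<inverse> \<noteq> P\<close>, hence all of \<open>g P g\<inverse>\<close>, into \<open>N\<close>; but then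
  \<open>P \<cdot> g P g\<inverse> \<subseteq> N\<close> has \<open>p\<^sup>2 > |N|\<close> elements.

  Hence two nontrivial elements of \<open>P\<close> are conjugate only if equal, each has centraliser \<open>P\<close>
  and a conjugacy class of size \<open>m\<close>; these classes cover \<open>(p - 1) m\<close> elements, and the remaining
  \<open>m\<close> elements form the Frobenius kernel \<open>K\<close>. For \<open>1 \<noteq> z \<in> K\<close>, the centraliser of \<open>z\<close>
  lies in \<open>K\<close> and the class of \<open>z\<close> in \<open>K - {1}\<close>; the orbit-stabiliser equation
  \<open>|z\<^sup>G| |C(z)| = m p\<close> then forces \<open>C(z) = K\<close>. So \<open>K\<close> is an abelian subgroup, and it is
  characteristic because it is exactly the set of solutions of \<open>z\<^sup>m = 1\<close>.
\<close>

definition centralizer :: "('a, 'b) monoid_scheme \<Rightarrow> 'a \<Rightarrow> 'a set"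
  where "centralizer G x = {a \<in> carrier G. a \<otimes>\<^bsub>G\<^esub> x = x \<otimes>\<^bsub>G\<^esub> a}"

definition conjugacy_class :: "('a, 'b) monoid_scheme \<Rightarrow> 'a \<Rightarrow> 'a set"
  where "conjugacy_class G x = {a \<otimes>\<^bsub>G\<^esub> x \<otimes>\<^bsub>G\<^esub> inv\<^bsub>G\<^esub> a | a. a \<in> carrier G}"

context group begin

lemma conj_nat_pow:
  assumes "g \<in> carrier G" "h \<in> carrier G"
  shows "(g \<otimes> h \<otimes> inv g) [^] (n::nat) = g \<otimes> h [^] n \<otimes> inv g"
proof (induction n)
  case 0
  then show ?case using assms by simp
next
  case (Suc n)
  then show ?case using assms by (simp add: m_assoc[symmetric]) (simp add: m_assoc)
qed

lemma conj_eq_iff: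
  "a \<in> carrier G \<Longrightarrow> x \<in> carrier G \<Longrightarrow> y \<in> carrier G \<Longrightarrow>
    a \<otimes> x \<otimes> inv a = y \<longleftrightarrow> a \<otimes> x = y \<otimes> a"
  by (simp add: inv_solve_right')

lemma conj_eq_one_iff:
  "a \<in> carrier G \<Longrightarrow> x \<in> carrier G \<Longrightarrow> a \<otimes> x \<otimes> inv a = \<one> \<longleftrightarrow> x = \<one>"
  by (simp add: conj_eq_iff)

lemma conj_conj:
  assumes "a \<in> carrier G" "b \<in> carrier G" "x \<in> carrier G"
  shows "a \<otimes> (b \<otimes> x \<otimes> inv b) \<otimes> inv a = (a \<otimes> b) \<otimes> x \<otimes> inv (a \<otimes> b)"
  using assms by (simp add: inv_mult_group m_assoc)

lemma conj_mult:
  assumes "a \<in> carrier G" "x \<in> carrier G" "y \<in> carrier G"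
  shows "(a \<otimes> x \<otimes> inv a) \<otimes> (a \<otimes> y \<otimes> inv a) = a \<otimes> (x \<otimes> y) \<otimes> inv a"
  using assms by (simp add: m_assoc) (simp add: m_assoc[symmetric])

lemma card_subgroup_dvd:
  assumes "subgroup H G" "subgroup K G" "H \<subseteq> K"
  shows "card H dvd card K"
proof -
  interpret K: group "G\<lparr>carrier := K\<rparr>"
    using assms(2) by (rule subgroup_imp_group)
  have "card (rcosets\<^bsub>G\<lparr>carrier := K\<rparr>\<^esub> H) * card H = card K"
    using K.lagrange[OF subgroup_incl[OF assms]] by (simp add: order_def)
  then show ?thesis by (metis dvd_triv_right)
qed

lemma subgroup_nat_pow_card:
  assumes "subgroup H G" "h \<in> H"
  shows "h [^] card H = \<one>"
proof -
  interpret H: group "G\<lparr>carrier := H\<rparr>"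
    using assms(1) by (rule subgroup_imp_group)
  have "h [^]\<^bsub>G\<lparr>carrier := H\<rparr>\<^esub> order (G\<lparr>carrier := H\<rparr>) = \<one>\<^bsub>G\<lparr>carrier := H\<rparr>\<^esub>"
    using H.pow_order_eq_1 assms(2) by simp
  then show ?thesis by (simp add: order_def flip: nat_pow_consistent)
qed

lemma card_set_mult:
  assumes "subgroup H G" "subgroup K G" "H \<inter> K = {\<one>}"
  shows "card (H <#> K) = card H * card K"
proof -
  have HG: "H \<subseteq> carrier G" and KG: "K \<subseteq> carrier G"
    using assms(1,2) subgroup.subset by auto
  have "inj_on (\<lambda>(h, k). h \<otimes> k) (H \<times> K)"
  proof (rule inj_onI, clarsimp)
    fix h k h' k' assume hk: "h \<in> H" "k \<in> K" "h' \<in> H" "k' \<in> K" "h \<otimes> k = h' \<otimes> k'"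
    have carr: "h \<in> carrier G" "k \<in> carrier G" "h' \<in> carrier G" "k' \<in> carrier G"
      using hk HG KG by auto
    have "inv h' \<otimes> h = k' \<otimes> inv k"
      using hk(5) carr by (metis inv_closed inv_solve_left' inv_solve_right m_assoc m_closed)
    moreover have "inv h' \<otimes> h \<in> H" "k' \<otimes> inv k \<in> K"
      using hk assms(1,2) by (auto intro: subgroup.m_closed subgroup.m_inv_closed)
    ultimately have "inv h' \<otimes> h = \<one>" "k' \<otimes> inv k = \<one>" using assms(3) by auto
    then show "h = h' \<and> k = k'" using carr by (metis inv_equality inv_inv inv_closed r_inv_ex)
  qed
  moreover have "H <#> K = (\<lambda>(h, k). h \<otimes> k) ` (H \<times> K)"
    unfolding set_mult_def by auto
  ultimately show ?thesis by (simp add: card_image card_cartesian_product)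
qed

lemma prime_card_subgroup_subset:
  assumes "subgroup H G" "Factorial_Ring.prime (card H)" "subgroup K G"
    and "h \<in> H" "h \<in> K" "h \<noteq> \<one>"
  shows "H \<subseteq> K"
proof -
  have "finite H" using assms(2) card_ge_0_finite prime_gt_0_nat by blast
  have HK: "subgroup (H \<inter> K) G" using assms(1,3) by (rule subgroups_Inter_pair)
  have "card {\<one>, h} \<le> card (H \<inter> K)"
    using assms(4,5) subgroup.one_closed[OF HK] \<open>finite H\<close> by (intro card_mono) auto
  then have "card (H \<inter> K) \<noteq> 1" using assms(6) by auto
  moreover have "card (H \<inter> K) dvd card H" using card_subgroup_dvd[OF HK assms(1)] by blast
  ultimately have "card (H \<inter> K) = card H" using assms(2) by (auto simp: prime_nat_iff)
  then have "H \<inter> K = H" using \<open>finite H\<close> by (metis Int_lower1 card_subset_eq)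
  then show ?thesis by blast
qed

section \<open>Centralizers and conjugacy classes\<close>

lemma mem_centralizer_iff:
  "x \<in> carrier G \<Longrightarrow> a \<in> centralizer G x \<longleftrightarrow> a \<in> carrier G \<and> a \<otimes> x \<otimes> inv a = x"
  unfolding centralizer_def using conj_eq_iff by blast

lemma centralizer_subgroup:
  assumes "x \<in> carrier G"
  shows "subgroup (centralizer G x) G"
proof (rule subgroupI)
  show "centralizer G x \<subseteq> carrier G" "centralizer G x \<noteq> {}"
    using assms by (auto simp: centralizer_def)
next
  fix a assume "a \<in> centralizer G x"
  then have a: "a \<in> carrier G" "a \<otimes> x \<otimes> inv a = x" using assms mem_centralizer_iff by auto
  then have "inv a \<otimes> x \<otimes> inv (inv a) = x"
    using assms conjugation_is_surj[of "inv a" x] by simp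
  then show "inv a \<in> centralizer G x" using assms a(1) mem_centralizer_iff by simp
next
  fix a b assume "a \<in> centralizer G x" "b \<in> centralizer G x"
  then have ab: "a \<in> carrier G" "b \<in> carrier G" "a \<otimes> x = x \<otimes> a" "b \<otimes> x = x \<otimes> b"
    by (auto simp: centralizer_def)
  have "a \<otimes> b \<otimes> x = a \<otimes> (x \<otimes> b)" using ab assms by (simp add: m_assoc)
  also have "\<dots> = x \<otimes> (a \<otimes> b)" using ab assms by (simp add: m_assoc[symmetric])
  finally show "a \<otimes> b \<in> centralizer G x" using ab by (simp add: centralizer_def)
qed

lemma prime_card_subgroup_comm:
  assumes "subgroup H G" "Factorial_Ring.prime (card H)" "a \<in> H" "b \<in> H"
  shows "a \<otimes> b = b \<otimes> a"
proof (cases "a = \<one>")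
  case True
  then show ?thesis using subgroup.mem_carrier[OF assms(1,4)] by simp
next
  case False
  have "a \<in> carrier G" using subgroup.mem_carrier[OF assms(1,3)] .
  then have "H \<subseteq> centralizer G a"
    using prime_card_subgroup_subset[OF assms(1,2) centralizer_subgroup assms(3) _ False]
    by (simp add: centralizer_def)
  then show ?thesis using assms(4) by (auto simp: centralizer_def)
qed

lemma card_conjugacy_class_mult_card_centralizer:
  assumes "x \<in> carrier G"
  shows "card (conjugacy_class G x) * card (centralizer G x) = order G"
proof -
  interpret conj: group_action G "carrier G" "\<lambda>g. \<lambda>h \<in> carrier G. g \<otimes> h \<otimes> inv g"
    by (rule action_by_conjugation)
  have "orbit G (\<lambda>g. \<lambda>h \<in> carrier G. g \<otimes> h \<otimes> inv g) x = conjugacy_class G x"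
    using assms by (auto simp: orbit_def conjugacy_class_def)
  moreover have "stabilizer G (\<lambda>g. \<lambda>h \<in> carrier G. g \<otimes> h \<otimes> inv g) x = centralizer G x"
    using assms mem_centralizer_iff by (auto simp: stabilizer_def)
  ultimately show ?thesis using conj.orbit_stabilizer_theorem[OF assms] by simp
qed

lemma conjugacy_classes_meet:
  assumes "x \<in> carrier G" "y \<in> carrier G" "conjugacy_class G x \<inter> conjugacy_class G y \<noteq> {}"
  obtains c where "c \<in> carrier G" "y = c \<otimes> x \<otimes> inv c"
proof -
  obtain a b where ab: "a \<in> carrier G" "b \<in> carrier G" "a \<otimes> x \<otimes> inv a = b \<otimes> y \<otimes> inv b"
    using assms(3) by (auto simp: conjugacy_class_def)
  have "y = inv b \<otimes> (a \<otimes> x \<otimes> inv a) \<otimes> inv (inv b)"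
    using ab assms conjugation_is_surj[of "inv b" y] by simp
  also have "\<dots> = (inv b \<otimes> a) \<otimes> x \<otimes> inv (inv b \<otimes> a)"
    using ab(1,2) assms(1) conj_conj[of "inv b" a x] by simp
  finally show ?thesis using ab(1,2) by (intro that[of "inv b \<otimes> a"]) auto
qed

section \<open>Conjugate subgroups and normalizers\<close>

lemma conj_set_eq_image:
  "H \<subseteq> carrier G \<Longrightarrow> g \<in> carrier G \<Longrightarrow> g <# H #> inv g = (\<lambda>x. g \<otimes> x \<otimes> inv g) ` H"
  unfolding l_coset_def r_coset_def by auto

lemma subgroup_conj_set:
  assumes "subgroup H G" "g \<in> carrier G"
  shows "subgroup (g <# H #> inv g) G"
  using subgroup_conjugation_is_surj1[of "inv g" H] assms by simp

lemma card_conj_set: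
  assumes "H \<subseteq> carrier G" "g \<in> carrier G"
  shows "card (g <# H #> inv g) = card H"
proof -
  have "inj_on (\<lambda>x. g \<otimes> x \<otimes> inv g) H"
    using assms conjugation_is_inj by (blast intro: inj_onI)
  then show ?thesis using assms by (simp add: conj_set_eq_image card_image)
qed

lemma normalizer_iff_conj_set_subset:
  assumes "H \<subseteq> carrier G" "finite H"
  shows "g \<in> normalizer G H \<longleftrightarrow> g \<in> carrier G \<and> g <# H #> inv g \<subseteq> H"
proof -
  have "g <# H #> inv g = H \<longleftrightarrow> g <# H #> inv g \<subseteq> H" if "g \<in> carrier G"
    using card_conj_set[OF assms(1) that] assms(2) card_subset_eq by (metis order_refl)
  then show ?thesis using assms(1) by (auto simp: normalizer_def stabilizer_def)
qed

lemma conj_mem_of_mem_normalizer: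
  assumes "g \<in> normalizer G H" "H \<subseteq> carrier G" "h \<in> H"
  shows "g \<otimes> h \<otimes> inv g \<in> H"
proof -
  have "g \<in> carrier G" "g <# H #> inv g = H"
    using assms(1,2) by (auto simp: normalizer_def stabilizer_def)
  then show ?thesis using assms(2,3) by (metis conj_set_eq_image imageI)
qed

lemma subgroup_subset_normalizer:
  assumes "subgroup H G"
  shows "H \<subseteq> normalizer G H"
  using subgroup.subset[OF normal_imp_subgroup[OF subgroup_in_normalizer[OF assms]]] by simp

lemma normal_of_normalizer_eq_carrier:
  assumes "subgroup H G" "normalizer G H = carrier G"
  shows "H \<lhd> G"
  using assms conj_mem_of_mem_normalizer subgroup.subset by (metis normal_inv_iff)

lemma prime_card_subgroup_inter_conj:
  assumes "subgroup H G" "Factorial_Ring.prime (card H)" "g \<in> carrier G" "g \<notin> normalizer G H"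
  shows "H \<inter> (g <# H #> inv g) = {\<one>}"
proof -
  have HG: "H \<subseteq> carrier G" using assms(1) subgroup.subset by blast
  have "finite H" using assms(2) card_ge_0_finite prime_gt_0_nat by blast
  have conj: "subgroup (g <# H #> inv g) G" "card (g <# H #> inv g) = card H"
    using subgroup_conj_set[OF assms(1,3)] card_conj_set[OF HG assms(3)] by auto
  have "\<not> g <# H #> inv g \<subseteq> H"
    using assms(3,4) normalizer_iff_conj_set_subset[OF HG \<open>finite H\<close>] by blast
  then have "z = \<one>" if "z \<in> H" "z \<in> g <# H #> inv g" for z
    using prime_card_subgroup_subset[OF conj(1) _ assms(1)] that assms(2) conj(2) by auto
  then show ?thesis
    using subgroup.one_closed[OF assms(1)] subgroup.one_closed[OF conj(1)] by blast
qed

lemma exists_conj_mem_of_card_rcosets_less: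
  assumes "finite (carrier G)" "subgroup H G" "subgroup P G" "g \<in> carrier G"
    and "card (rcosets H) < card P"
  shows "\<exists>h\<in>P. h \<noteq> \<one> \<and> g \<otimes> h \<otimes> inv g \<in> H"
proof -
  have PG: "P \<subseteq> carrier G" using assms(3) subgroup.subset by blast
  have "(\<lambda>h. H #> (g \<otimes> h)) ` P \<subseteq> rcosets H"
    unfolding RCOSETS_def using assms(4) PG by blast
  moreover have "finite (rcosets H)"
    using assms(1) by (simp add: RCOSETS_def r_coset_def)
  ultimately have "\<not> inj_on (\<lambda>h. H #> (g \<otimes> h)) P"
    using assms(5) by (metis card_image card_mono not_le)
  then obtain h1 h2 where h: "h1 \<in> P" "h2 \<in> P" "h1 \<noteq> h2" "H #> (g \<otimes> h1) = H #> (g \<otimes> h2)"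
    unfolding inj_on_def by blast
  have carr: "h1 \<in> carrier G" "h2 \<in> carrier G" using h PG by auto
  have "g \<otimes> h1 \<in> H #> (g \<otimes> h2)"
    using rcos_self[OF _ assms(2), of "g \<otimes> h1"] h(4) carr assms(4) by simp
  then have "(g \<otimes> h1) \<otimes> inv (g \<otimes> h2) \<in> H"
    using subgroup.rcos_module_imp[OF assms(2) is_group] carr assms(4) by simp
  moreover have "(g \<otimes> h1) \<otimes> inv (g \<otimes> h2) = g \<otimes> (h1 \<otimes> inv h2) \<otimes> inv g"
    using carr assms(4) by (simp add: inv_mult_group m_assoc)
  moreover have "h1 \<otimes> inv h2 \<in> P"
    using h assms(3) by (blast intro: subgroup.m_closed subgroup.m_inv_closed)
  moreover have "h1 \<otimes> inv h2 \<noteq> \<one>"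
    using h(3) carr inv_solve_right'[of \<one> h1 h2] by simp
  ultimately show ?thesis by metis
qed

lemma characteristic_subgroup_of_roots:
  assumes "subgroup {z \<in> carrier G. z [^] n = \<one>} G"
  shows "characteristic_subgroup {z \<in> carrier G. z [^] (n::nat) = \<one>} G"
  unfolding characteristic_subgroup_def
proof (intro conjI ballI assms)
  fix \<phi> assume "\<phi> \<in> iso G G"
  then have hom: "\<phi> \<in> hom G G" and bij: "bij_betw \<phi> (carrier G) (carrier G)"
    by (auto simp: iso_def)
  have roots: "\<phi> z [^] n = \<one> \<longleftrightarrow> z [^] n = \<one>" if "z \<in> carrier G" for z
  proof -
    have "\<phi> z [^] n = \<one> \<longleftrightarrow> \<phi> (z [^] n) = \<phi> \<one>"
      using hom_nat_pow[OF hom that is_group is_group] hom_one[OF hom is_group is_group] by simp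
    also have "\<dots> \<longleftrightarrow> z [^] n = \<one>"
      using inj_on_eq_iff[OF bij_betw_imp_inj_on[OF bij]] that by simp
    finally show ?thesis .
  qed
  show "\<phi> ` {z \<in> carrier G. z [^] n = \<one>} = {z \<in> carrier G. z [^] n = \<one>}"
  proof
    show "\<phi> ` {z \<in> carrier G. z [^] n = \<one>} \<subseteq> {z \<in> carrier G. z [^] n = \<one>}"
      using roots bij_betwE[OF bij] by auto
    show "{z \<in> carrier G. z [^] n = \<one>} \<subseteq> \<phi> ` {z \<in> carrier G. z [^] n = \<one>}"
    proof clarify
      fix y assume "y \<in> carrier G" "y [^] n = \<one>"
      then obtain z where "z \<in> carrier G" "y = \<phi> z"
        using bij by (metis bij_betw_def imageE)
      then show "y \<in> \<phi> ` {z \<in> carrier G. z [^] n = \<one>}"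
        using roots \<open>y [^] n = \<one>\<close> by auto
    qed
  qed
qed

end

lemma divisor_ge_least_prime_divisor:
  fixes m n q :: nat
  assumes "\<forall>r. Factorial_Ring.prime r \<and> r dvd m \<longrightarrow> q \<le> r" "n dvd m" "2 \<le> n"
  shows "q \<le> n"
proof -
  obtain r where r: "Factorial_Ring.prime r" "r dvd n" using assms(3) prime_factor_nat[of n] by auto
  then have "q \<le> r" using assms(1,2) dvd_trans by blast
  moreover have "r \<le> n" using r(2) assms(3) by (simp add: dvd_imp_le)
  ultimately show ?thesis by simp
qed

section \<open>The Frobenius kernel\<close>

locale non_normal_prime_sylow = group G for G (structure) +
  fixes m p q :: nat and P :: "'a set"
  assumes finite_carrier: "finite (carrier G)"
    and order_eq: "order G = m * p"
    and prime_p: "Factorial_Ring.prime p"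
    and p_less: "p < m"
    and divisor_ge: "\<And>n. n dvd m \<Longrightarrow> 2 \<le> n \<Longrightarrow> q \<le> n"
    and m_less: "m < p * q"
    and sylow_P: "sylow_subgroup p P G"
    and not_normal_P: "\<not> P \<lhd> G"
begin

lemma m_pos: "0 < m"
  using order_eq order_gt_0_iff_finite finite_carrier by (metis mult_eq_0_iff neq0_conv)

lemma not_dvd_m: "\<not> p dvd m"
proof
  assume "p dvd m"
  then obtain k where k: "m = p * k" by blast
  then have "2 \<le> k" using p_less by (cases k) auto
  then have "q \<le> k" using divisor_ge k by simp
  then show False using k m_less by simp
qed

lemma subgroup_P: "subgroup P G"
  using sylow_P by (simp add: sylow_subgroup_def)

lemma card_P: "card P = p"
proof -
  have "multiplicity p (order G) = 1"
    using order_eq prime_p not_dvd_m m_pos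
    by (simp add: prime_elem_multiplicity_mult_distrib not_dvd_imp_multiplicity_0 multiplicity_self)
  then show ?thesis using sylow_P by (simp add: sylow_subgroup_def)
qed

lemma P_subset: "P \<subseteq> carrier G"
  using subgroup_P by (rule subgroup.subset)

lemma prime_card_P: "Factorial_Ring.prime (card P)"
  using card_P prime_p by simp

lemma finite_P: "finite P"
  using P_subset finite_carrier by (rule finite_subset)

lemma cofactor_less: "c * d = m \<Longrightarrow> 2 \<le> c \<Longrightarrow> d < p"
  using divisor_ge[of c] m_less
  by (metis dvd_triv_left mult_le_mono1 mult.commute le_less_trans nat_mult_less_cancel_disj)

lemma card_normalizer_P_less:
  assumes "normalizer G P \<noteq> P"
  shows "card (rcosets (normalizer G P)) < p" and "card (normalizer G P) < p * p"
proof -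
  let ?N = "normalizer G P"
  have N: "subgroup ?N G" using P_subset by (rule normalizer_imp_subgroup)
  have PN: "P \<subseteq> ?N" using subgroup_P by (rule subgroup_subset_normalizer)
  obtain d where d: "card ?N = p * d"
    using card_subgroup_dvd[OF subgroup_P N PN] card_P by blast
  define c where "c = card (rcosets ?N)"
  have c_card: "c * card ?N = m * p" using lagrange[OF N] order_eq c_def by simp
  then have cd: "c * d = m" using d prime_gt_0_nat[OF prime_p] by (simp add: mult.commute mult.left_commute)
  have "?N \<noteq> carrier G" using normal_of_normalizer_eq_carrier subgroup_P not_normal_P by blast
  then have "c \<noteq> 1"
    using c_card order_eq card_subset_eq[OF finite_carrier subgroup.subset[OF N]] by (auto simp: order_def)
  then have c2: "2 \<le> c" using cd m_pos by (cases c) auto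
  have "d \<noteq> 1"
    using assms d card_P card_subset_eq[OF finite_subset[OF subgroup.subset[OF N] finite_carrier] PN]
    by auto
  then have d2: "2 \<le> d" using cd m_pos by (cases d) auto
  show "card (rcosets ?N) < p" using cofactor_less[of d c] cd d2 c_def by (simp add: mult.commute)
  show "card ?N < p * p" using cofactor_less[of c d] cd c2 d prime_gt_0_nat[OF prime_p] by simp
qed

lemma normalizer_P: "normalizer G P = P"
proof (rule ccontr)
  let ?N = "normalizer G P"
  assume "?N \<noteq> P"
  have N: "subgroup ?N G" using P_subset by (rule normalizer_imp_subgroup)
  have "?N \<noteq> carrier G" using normal_of_normalizer_eq_carrier subgroup_P not_normal_P by blast
  then obtain g where g: "g \<in> carrier G" "g \<notin> ?N" using subgroup.subset[OF N] by blast
  obtain h where h: "h \<in> P" "h \<noteq> \<one>" "g \<otimes> h \<otimes> inv g \<in> ?N"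
    using exists_conj_mem_of_card_rcosets_less[OF finite_carrier N subgroup_P g(1)]
      card_normalizer_P_less(1)[OF \<open>?N \<noteq> P\<close>] card_P by auto
  let ?Q = "g <# P #> inv g"
  have Q: "subgroup ?Q G" "card ?Q = p"
    using subgroup_conj_set[OF subgroup_P g(1)] card_conj_set[OF P_subset g(1)] card_P by auto
  have "g \<otimes> h \<otimes> inv g \<in> ?Q" using h(1) g(1) P_subset by (simp add: conj_set_eq_image)
  moreover have "g \<otimes> h \<otimes> inv g \<noteq> \<one>" using h(1,2) g(1) P_subset conj_eq_one_iff by auto
  ultimately have "?Q \<subseteq> ?N"
    using prime_card_subgroup_subset[OF Q(1) _ N] Q(2) prime_p h(3) by simp
  then have "P <#> ?Q \<subseteq> ?N"
    using subgroup_subset_normalizer[OF subgroup_P] subgroup.m_closed[OF N] by (auto simp: set_mult_def)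
  moreover have "card (P <#> ?Q) = p * p"
    using card_set_mult[OF subgroup_P Q(1) prime_card_subgroup_inter_conj[OF subgroup_P prime_card_P g]]
      card_P Q(2) by simp
  ultimately have "p * p \<le> card ?N"
    using card_mono[OF finite_subset[OF subgroup.subset[OF N] finite_carrier]] by metis
  then show False using card_normalizer_P_less(2)[OF \<open>?N \<noteq> P\<close>] by simp
qed

lemma mem_P_of_conj_mem:
  assumes "g \<in> carrier G" "h \<in> P" "h \<noteq> \<one>" "g \<otimes> h \<otimes> inv g \<in> P"
  shows "g \<in> P"
proof -
  have "g <# P #> inv g \<subseteq> P"
  proof (rule prime_card_subgroup_subset[OF subgroup_conj_set[OF subgroup_P assms(1)] _ subgroup_P])
    show "Factorial_Ring.prime (card (g <# P #> inv g))"
      using card_conj_set[OF P_subset assms(1)] prime_card_P by simp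
    show "g \<otimes> h \<otimes> inv g \<in> g <# P #> inv g"
      using assms(1,2) P_subset by (simp add: conj_set_eq_image)
    show "g \<otimes> h \<otimes> inv g \<noteq> \<one>"
      using assms(1-3) P_subset conj_eq_one_iff by auto
  qed (rule assms(4))
  then show ?thesis
    using assms(1) normalizer_iff_conj_set_subset[OF P_subset finite_P] normalizer_P by blast
qed

lemma centralizer_eq_P:
  assumes "x \<in> P" "x \<noteq> \<one>"
  shows "centralizer G x = P"
proof
  show "centralizer G x \<subseteq> P"
  proof
    fix a assume "a \<in> centralizer G x"
    then have "a \<in> carrier G" "a \<otimes> x \<otimes> inv a = x"
      using assms(1) P_subset mem_centralizer_iff by auto
    then show "a \<in> P" using mem_P_of_conj_mem assms by simp
  qed
  show "P \<subseteq> centralizer G x"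
    using assms P_subset prime_card_subgroup_comm[OF subgroup_P prime_card_P] by (auto simp: centralizer_def)
qed

lemma card_conjugacy_class_P:
  assumes "x \<in> P" "x \<noteq> \<one>"
  shows "card (conjugacy_class G x) = m"
  using card_conjugacy_class_mult_card_centralizer[of x] centralizer_eq_P[OF assms] assms P_subset
    order_eq card_P prime_gt_0_nat[OF prime_p] by auto

lemma conjugacy_classes_P_disjoint:
  assumes "x \<in> P" "x \<noteq> \<one>" "y \<in> P" "x \<noteq> y"
  shows "conjugacy_class G x \<inter> conjugacy_class G y = {}"
proof (rule ccontr)
  assume "conjugacy_class G x \<inter> conjugacy_class G y \<noteq> {}"
  then obtain c where c: "c \<in> carrier G" "y = c \<otimes> x \<otimes> inv c"
    using conjugacy_classes_meet assms(1,3) P_subset by blast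
  then have "c \<in> centralizer G x" using assms mem_P_of_conj_mem centralizer_eq_P by auto
  then have "c \<otimes> x \<otimes> inv c = x"
    using assms(1) P_subset mem_centralizer_iff by blast
  then show False using c assms(4) by simp
qed

definition frobenius_kernel :: "'a set"
  where "frobenius_kernel = carrier G - (\<Union>x \<in> P - {\<one>}. conjugacy_class G x)"

lemma frobenius_kernel_subset: "frobenius_kernel \<subseteq> carrier G"
  by (auto simp: frobenius_kernel_def)

lemma not_mem_frobenius_kernel_iff:
  "z \<in> carrier G \<Longrightarrow>
    z \<notin> frobenius_kernel \<longleftrightarrow> (\<exists>x \<in> P - {\<one>}. \<exists>a \<in> carrier G. z = a \<otimes> x \<otimes> inv a)"
  by (auto simp: frobenius_kernel_def conjugacy_class_def)

lemma one_mem_frobenius_kernel: "\<one> \<in> frobenius_kernel"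
  using not_mem_frobenius_kernel_iff P_subset conj_eq_one_iff by (metis Diff_iff in_mono one_closed singletonI)

lemma card_frobenius_kernel: "card frobenius_kernel = m"
proof -
  let ?U = "\<Union>x \<in> P - {\<one>}. conjugacy_class G x"
  have UG: "?U \<subseteq> carrier G" using P_subset by (auto simp: conjugacy_class_def)
  have "card ?U = (\<Sum>x \<in> P - {\<one>}. card (conjugacy_class G x))"
    using finite_P finite_subset[OF _ finite_carrier] conjugacy_classes_P_disjoint
    by (intro card_UN_disjoint) (auto simp: conjugacy_class_def)
  also have "\<dots> = (p - 1) * m"
    using card_conjugacy_class_P finite_P card_P subgroup.one_closed[OF subgroup_P] by simp
  finally have "card ?U = (p - 1) * m" .
  have "card frobenius_kernel = card (carrier G) - card ?U"
    unfolding frobenius_kernel_def using finite_subset[OF UG finite_carrier] UG by (rule card_Diff_subset)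
  also have "\<dots> = m * p - (p - 1) * m"
    using order_eq \<open>card ?U = (p - 1) * m\<close> by (simp add: order_def)
  also have "\<dots> = m"
    using prime_gt_0_nat[OF prime_p] by (simp add: diff_mult_distrib2 mult.commute)
  finally show ?thesis .
qed

lemma conj_not_mem_frobenius_kernel:
  assumes "z \<in> carrier G" "z \<notin> frobenius_kernel" "b \<in> carrier G"
  shows "b \<otimes> z \<otimes> inv b \<notin> frobenius_kernel"
proof -
  obtain x a where xa: "x \<in> P - {\<one>}" "a \<in> carrier G" "z = a \<otimes> x \<otimes> inv a"
    using assms(1,2) not_mem_frobenius_kernel_iff by blast
  then have "b \<otimes> z \<otimes> inv b = (b \<otimes> a) \<otimes> x \<otimes> inv (b \<otimes> a)"
    using assms(3) P_subset conj_conj by auto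
  moreover have "b \<otimes> a \<in> carrier G" "b \<otimes> z \<otimes> inv b \<in> carrier G"
    using assms(1,3) xa(2) by auto
  ultimately show ?thesis using xa(1) not_mem_frobenius_kernel_iff by blast
qed

lemma conj_mem_frobenius_kernel:
  assumes "z \<in> frobenius_kernel" "b \<in> carrier G"
  shows "b \<otimes> z \<otimes> inv b \<in> frobenius_kernel"
proof (rule ccontr)
  assume "b \<otimes> z \<otimes> inv b \<notin> frobenius_kernel"
  then have "inv b \<otimes> (b \<otimes> z \<otimes> inv b) \<otimes> inv (inv b) \<notin> frobenius_kernel"
    using assms frobenius_kernel_subset conj_not_mem_frobenius_kernel[of _ "inv b"] by auto
  then show False
    using assms frobenius_kernel_subset conjugation_is_surj[of "inv b" z] by auto
qed

lemma centralizer_subset_frobenius_kernel: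
  assumes "z \<in> frobenius_kernel" "z \<noteq> \<one>"
  shows "centralizer G z \<subseteq> frobenius_kernel"
proof
  fix c assume c: "c \<in> centralizer G z"
  have zG: "z \<in> carrier G" using assms(1) frobenius_kernel_subset by blast
  show "c \<in> frobenius_kernel"
  proof (rule ccontr)
    assume "c \<notin> frobenius_kernel"
    then obtain x a where xa: "x \<in> P - {\<one>}" "a \<in> carrier G" "c = a \<otimes> x \<otimes> inv a"
      using c not_mem_frobenius_kernel_iff by (auto simp: centralizer_def)
    have xG: "x \<in> carrier G" using xa(1) P_subset by blast
    define z' where "z' = inv a \<otimes> z \<otimes> a"
    have z'G: "z' \<in> carrier G" using zG xa(2) by (simp add: z'_def)
    have z: "z = a \<otimes> z' \<otimes> inv a"
      using zG xa(2) conjugation_is_surj[of a z] by (simp add: z'_def)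
    have "a \<otimes> (z' \<otimes> x) \<otimes> inv a = a \<otimes> (x \<otimes> z') \<otimes> inv a"
      using c xa z z'G xG by (simp add: centralizer_def conj_mult)
    then have "z' \<in> centralizer G x"
      using z'G xG xa(2) by (simp add: centralizer_def)
    then have "z' \<in> P - {\<one>}"
      using centralizer_eq_P xa(1) z assms(2) xa(2) by auto
    then have "z \<notin> frobenius_kernel"
      using z zG xa(2) not_mem_frobenius_kernel_iff by blast
    then show False using assms(1) by blast
  qed
qed

lemma eq_m_of_mult_eq:
  assumes "k * e = m * p" "k < m" "e \<le> m"
  shows "e = m"
proof -
  have "p < e"
  proof (rule ccontr)
    assume "\<not> p < e"
    then have "k * e < m * p"
      using assms(2) prime_gt_0_nat[OF prime_p] by (metis mult_le_mono2 mult_less_mono1 not_less le_less_trans)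
    then show False using assms(1) by simp
  qed
  have "p dvd k \<or> p dvd e"
    using assms(1) prime_p by (metis dvd_triv_right prime_dvd_mult_iff)
  then show ?thesis
  proof
    assume "p dvd e"
    then obtain f where f: "e = p * f" by blast
    then have "f * k = m" using assms(1) prime_gt_0_nat[OF prime_p] by (simp add: mult.commute)
    moreover have "2 \<le> f" using f \<open>p < e\<close> by (cases f) (auto simp: not_less_eq_eq)
    ultimately have "k < p" by (rule cofactor_less)
    moreover have "p * f \<le> k * f" using f assms(3) \<open>f * k = m\<close> by (simp add: mult.commute)
    ultimately show ?thesis using \<open>2 \<le> f\<close> by simp
  next
    assume "p dvd k"
    then obtain k' where k': "k = p * k'" by blast
    then have km: "k' * e = m" using assms(1) prime_gt_0_nat[OF prime_p] by (simp add: mult.commute)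
    have "\<not> 2 \<le> k'" using cofactor_less[OF km] \<open>p < e\<close> by linarith
    moreover have "k' \<noteq> 0" using km m_pos by auto
    ultimately show ?thesis using km by (cases k') auto
  qed
qed

lemma centralizer_eq_frobenius_kernel:
  assumes "z \<in> frobenius_kernel" "z \<noteq> \<one>"
  shows "centralizer G z = frobenius_kernel"
proof -
  have zG: "z \<in> carrier G" using assms(1) frobenius_kernel_subset by blast
  have fin: "finite frobenius_kernel" using finite_subset[OF frobenius_kernel_subset finite_carrier] .
  have "conjugacy_class G z \<subseteq> frobenius_kernel - {\<one>}"
    using assms zG conj_mem_frobenius_kernel conj_eq_one_iff by (auto simp: conjugacy_class_def)
  then have "card (conjugacy_class G z) < m"
    using card_mono[OF finite_Diff[OF fin]] card_frobenius_kernel one_mem_frobenius_kernel m_pos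
    by (metis card_Diff1_less fin le_less_trans)
  moreover have "card (centralizer G z) \<le> m"
    using card_mono[OF fin centralizer_subset_frobenius_kernel[OF assms]] card_frobenius_kernel by simp
  ultimately have "card (centralizer G z) = card frobenius_kernel"
    using eq_m_of_mult_eq card_conjugacy_class_mult_card_centralizer[OF zG] order_eq card_frobenius_kernel
    by simp
  then show ?thesis
    using card_subset_eq[OF fin centralizer_subset_frobenius_kernel[OF assms]] by simp
qed

lemma subgroup_frobenius_kernel: "subgroup frobenius_kernel G"
proof (cases "frobenius_kernel = {\<one>}")
  case True
  then show ?thesis using triv_subgroup by simp
next
  case False
  then obtain z where z: "z \<in> frobenius_kernel" "z \<noteq> \<one>" using one_mem_frobenius_kernel by blast
  then have "subgroup (centralizer G z) G" using frobenius_kernel_subset centralizer_subgroup by blast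
  then show ?thesis using centralizer_eq_frobenius_kernel[OF z] by simp
qed

lemma frobenius_kernel_comm:
  assumes "a \<in> frobenius_kernel" "b \<in> frobenius_kernel"
  shows "a \<otimes> b = b \<otimes> a"
proof (cases "b = \<one>")
  case True
  then show ?thesis using assms(1) frobenius_kernel_subset by auto
next
  case False
  then show ?thesis using assms centralizer_eq_frobenius_kernel by (auto simp: centralizer_def)
qed

lemma frobenius_kernel_eq_roots: "frobenius_kernel = {z \<in> carrier G. z [^] m = \<one>}"
proof (intro equalityI subsetI CollectI conjI)
  fix z assume "z \<in> frobenius_kernel"
  then show "z \<in> carrier G" "z [^] m = \<one>"
    using frobenius_kernel_subset subgroup_nat_pow_card[OF subgroup_frobenius_kernel]
      card_frobenius_kernel by auto
next
  fix z assume z: "z \<in> {z \<in> carrier G. z [^] m = \<one>}"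
  show "z \<in> frobenius_kernel"
  proof (rule ccontr)
    assume "z \<notin> frobenius_kernel"
    then obtain x a where xa: "x \<in> P - {\<one>}" "a \<in> carrier G" "z = a \<otimes> x \<otimes> inv a"
      using z not_mem_frobenius_kernel_iff by blast
    have xG: "x \<in> carrier G" using xa(1) P_subset by blast
    have "x [^] m = \<one>" using z xa xG conj_nat_pow conj_eq_one_iff by auto
    moreover have "x [^] p = \<one>" using subgroup_nat_pow_card[OF subgroup_P] xa(1) card_P by auto
    ultimately have "ord x dvd m" "ord x dvd p" using xG pow_eq_id by auto
    then have "ord x = 1" using prime_p not_dvd_m by (auto simp: prime_nat_iff)
    then show False using xa(1) xG pow_eq_id[of x 1] by simp
  qed
qed

end

theorem lemma2:
  fixes G (structure) and m p q :: nat
  assumes "group G" and "finite (carrier G)"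
    and "order G = m * p"
    and "Factorial_Ring.prime p"
    and "Factorial_Ring.prime q" and "q dvd m" and "\<forall>r. Factorial_Ring.prime r \<and> r dvd m \<longrightarrow> q \<le> r"
    and "real m / real q < real p" and "p < m"
    and "\<exists>P. sylow_subgroup p P G \<and> \<not> (P \<lhd> G)"
  shows "\<exists>H. characteristic_subgroup H G \<and> comm_group (G\<lparr>carrier := H\<rparr>) \<and> card H = m"
proof -
  interpret group G by fact
  obtain P where P: "sylow_subgroup p P G" "\<not> P \<lhd> G" using assms(10) by blast
  have "m < p * q"
    using assms(8) prime_gt_0_nat[OF assms(5)] by (simp add: divide_less_eq flip: of_nat_mult)
  then interpret non_normal_prime_sylow G m p q P
    using assms P divisor_ge_least_prime_divisor by unfold_locales auto
  have "characteristic_subgroup frobenius_kernel G"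
    using characteristic_subgroup_of_roots[of m] subgroup_frobenius_kernel
    by (simp flip: frobenius_kernel_eq_roots)
  moreover have "comm_group (G\<lparr>carrier := frobenius_kernel\<rparr>)"
    using group.group_comm_groupI[OF subgroup_imp_group[OF subgroup_frobenius_kernel]]
      frobenius_kernel_comm by simp
  ultimately show ?thesis using card_frobenius_kernel by blast
qed

end
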